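(* Let $\gamma\ge2$ be an integer, $\varepsilon\ge0$, and $P_0$ a probability measure on $\mathbb{R}^n$. For $P\in N_\gamma(P_0)$ define: (i) $\mathbf{Q}^\star_\varepsilon(P)$ as the probability measure $Q\ll P_0$ with $\frac{dQ}{dP_0}(x)=\mathrm{clip}\big(\frac1{r_P}\frac{dP}{dP_0}(x);\frac{\gamma+1}{\gamma+e^\varepsilon},\frac{(\gamma+1)e^\varepsilon}{\gamma+e^\varepsilon}\big)$, where $r_P>0$ is chosen so that $Q$ has total mass $1$; (ii) $\mathbf{Q}^\star_{g_\varepsilon}(P)=\lambda P+(1-\lambda)P_0$ with $\lambda=\frac{e^\varepsilon-1}{(1-\frac1\gamma)e^\varepsilon+\gamma-1}=\frac{\gamma(e^\varepsilon-1)}{(\gamma-1)(e^\varepsilon+\gamma)}$. Then for every $f$-divergence $D_f$ and every $P\in N_\gamma(P_0)$, $D_f(P\|\mathbf{Q}^\star_\varepsilon(P))\le D_f(P\|\mathbf{Q}^\star_{g_\varepsilon}(P))$.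
   Context: $\mathrm{clip}(x;s_1,s_2)=\max\{s_1,\min\{s_2,x\}\}$. For $\gamma\ge1$, $E_\gamma(P\|Q)=\mathbb{E}_Q[\max\{\frac{dP}{dQ}-\gamma,0\}]$ and $N_\gamma(P_0)=\{P:E_\gamma(P\|P_0)=E_\gamma(P_0\|P)=0\}$, equivalently the $P\ll P_0$ with $\frac1\gamma\le\frac{dP}{dP_0}\le\gamma$. $D_f(P\|Q)=\int qf(p/q)\,d\nu$ for convex $f:(0,\infty)\to\mathbb{R}$ with $f(1)=0$, densities w.r.t. a dominating measure $\nu$, conventions $f(0)=\lim_{t\to0^+}f(t)$, $0f(0/0)=0$, $0f(a/0)=a\lim_{u\to\infty}f(u)/u$. (In the paper these two maps are, on $N_\gamma(P_0)$, the locally minimax-optimal $\varepsilon$-LDP sampler and the locally minimax-optimal $g_\varepsilon$-FLDP mixture sampler.) *)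

theory Defs
  imports "HOL-Probability.Probability"
begin

definition clip :: "real \<Rightarrow> real \<Rightarrow> real \<Rightarrow> real" where
  "clip x s1 s2 = max s1 (min s2 x)"

definition dens :: "'a measure \<Rightarrow> 'a measure \<Rightarrow> 'a \<Rightarrow> real" where
  "dens P0 P x = enn2real (RN_deriv P0 P x)"

definition N_gamma :: "real \<Rightarrow> 'a measure \<Rightarrow> 'a measure set" where
  "N_gamma \<gamma> P0 = {P. prob_space P \<and> sets P = sets P0 \<and> absolutely_continuous P0 P \<and>
     (AE x in P0. ennreal (1 / \<gamma>) \<le> RN_deriv P0 P x \<and> RN_deriv P0 P x \<le> ennreal \<gamma>)}"

text \<open>Density dQ/dP0 of Q*_eps(P) for a given normalising constant r.\<close>
definition ldp_dens :: "real \<Rightarrow> real \<Rightarrow> real \<Rightarrow> ('a \<Rightarrow> real) \<Rightarrow> 'a \<Rightarrow> real" where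
  "ldp_dens \<gamma> \<epsilon> r p x =
     clip (p x / r) ((\<gamma> + 1) / (\<gamma> + exp \<epsilon>)) ((\<gamma> + 1) * exp \<epsilon> / (\<gamma> + exp \<epsilon>))"

text \<open>Mixing weight lambda and density dQ/dP0 of Q*_{g_eps}(P) = lambda P + (1 - lambda) P0.\<close>
definition mix_weight :: "real \<Rightarrow> real \<Rightarrow> real" where
  "mix_weight \<gamma> \<epsilon> = (exp \<epsilon> - 1) / ((1 - 1 / \<gamma>) * exp \<epsilon> + \<gamma> - 1)"

definition fldp_dens :: "real \<Rightarrow> real \<Rightarrow> ('a \<Rightarrow> real) \<Rightarrow> 'a \<Rightarrow> real" where
  "fldp_dens \<gamma> \<epsilon> p x = mix_weight \<gamma> \<epsilon> * p x + (1 - mix_weight \<gamma> \<epsilon>)"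

definition f_zero :: "(real \<Rightarrow> real) \<Rightarrow> ereal" where
  "f_zero f = Lim (at_right 0) (\<lambda>t. ereal (f t))"

definition f_slope_inf :: "(real \<Rightarrow> real) \<Rightarrow> ereal" where
  "f_slope_inf f = Lim at_top (\<lambda>u. ereal (f u / u))"

definition fdiv_integrand :: "(real \<Rightarrow> real) \<Rightarrow> real \<Rightarrow> real \<Rightarrow> ereal" where
  "fdiv_integrand f p q =
     (if 0 < q then (if 0 < p then ereal (q * f (p / q)) else ereal q * f_zero f)
      else (if 0 < p then ereal p * f_slope_inf f else 0))"

definition fdiv :: "(real \<Rightarrow> real) \<Rightarrow> 'a measure \<Rightarrow> ('a \<Rightarrow> real) \<Rightarrow> ('a \<Rightarrow> real) \<Rightarrow> ereal" where
  "fdiv f \<nu> p q =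
     enn2ereal (\<integral>\<^sup>+ x. e2ennreal (fdiv_integrand f (p x) (q x)) \<partial>\<nu>)
     - enn2ereal (\<integral>\<^sup>+ x. e2ennreal (- fdiv_integrand f (p x) (q x)) \<partial>\<nu>)"

end

theory Submission
  imports Defs
begin

text \<open>Fix a subgradient \<open>m\<close> of \<open>f\<close> at \<open>r\<close> and put \<open>c = f r - m r\<close>. For fixed \<open>p > 0\<close> the function
  \<open>q \<mapsto> q f(p/q) - c q\<close> is, up to the constant \<open>m p\<close>, the perspective of the nonnegative convex
  function \<open>t \<mapsto> f t - f r - m (t - r)\<close>, which vanishes at \<open>t = r\<close>. It is therefore convex in \<open>q\<close>
  and minimal at \<open>q = p/r\<close>, so on an interval \<open>[a, b]\<close> it is minimised by \<open>clip (p/r) a b\<close>.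
  The mixture density \<open>\<lambda> p + 1 - \<lambda>\<close> takes its values in the clipping interval, because \<open>\<lambda>\<close> maps
  the range \<open>[1/\<gamma>, \<gamma>]\<close> of \<open>dP/dP\<^sub>0\<close> exactly onto it. Both densities have mass one, so integrating
  the pointwise inequality makes the terms \<open>c q\<close> cancel.\<close>

lemma clip_eq_self: "lo \<le> t \<Longrightarrow> t \<le> hi \<Longrightarrow> clip t lo hi = t"
  by (simp add: clip_def)

lemma clip_in_Icc: "lo \<le> hi \<Longrightarrow> clip t lo hi \<in> {lo..hi}"
  by (simp add: clip_def)

lemma convex_on_real_subgradient:
  fixes f :: "real \<Rightarrow> real"
  assumes f: "convex_on {0<..} f" and "0 < r"
  obtains m where "\<And>t. 0 < t \<Longrightarrow> f r + m * (t - r) \<le> f t"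
proof -
  have slope_mono: "(f r - f s) / (r - s) \<le> (f t - f r) / (t - r)"
    if "0 < s" "s < r" "r < t" for s t
  proof -
    have "(f s - f r) / (s - r) \<le> (f r - f t) / (r - t)"
      using convex_on_slope_le[OF f, of s t r] that by auto
    then show ?thesis by (metis minus_diff_eq minus_divide_divide)
  qed
  define S where "S = (\<lambda>s. (f r - f s) / (r - s)) ` {0<..<r}"
  have "S \<noteq> {}" using \<open>0 < r\<close> by (auto simp: S_def)
  moreover have "bdd_above S"
    using slope_mono[of _ "r + 1"] \<open>0 < r\<close>
    by (auto simp: S_def bdd_above_def intro!: exI[of _ "f (r + 1) - f r"])
  ultimately have left: "(f r - f s) / (r - s) \<le> Sup S" if "0 < s" "s < r" for s
    using that by (auto simp: S_def intro!: cSup_upper)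
  have right: "Sup S \<le> (f t - f r) / (t - r)" if "r < t" for t
    using \<open>S \<noteq> {}\<close> that by (auto simp: S_def intro!: cSup_least slope_mono)
  show ?thesis
  proof
    fix t :: real assume "0 < t"
    consider "t < r" | "t = r" | "r < t" by linarith
    then show "f r + Sup S * (t - r) \<le> f t"
    proof cases
      case 1
      then show ?thesis using left[OF \<open>0 < t\<close>] by (simp add: divide_le_eq algebra_simps)
    next
      case 3
      then show ?thesis using right by (simp add: le_divide_eq algebra_simps)
    qed simp
  qed
qed

lemma convex_on_perspective:
  fixes F :: "real \<Rightarrow> real"
  assumes F: "convex_on {0<..} F" and "0 < p"
  shows "convex_on {0<..} (\<lambda>q. q * F (p / q))"
proof (rule convex_onI)
  fix t x y :: real
  assume t: "0 < t" "t < 1" and xy: "x \<in> {0<..}" "y \<in> {0<..}"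
  define z where "z = (1 - t) * x + t * y"
  define u where "u = t * y / z"
  have "0 < z"
    using t xy by (simp add: z_def add_pos_pos)
  then have u: "0 \<le> u" "u \<le> 1" "1 - u = (1 - t) * x / z"
    using t xy by (auto simp: u_def z_def field_simps)
  have "(1 - u) * (p / x) = (1 - t) * p / z" "u * (p / y) = t * p / z"
    using xy by (simp add: u(3), simp add: u_def)
  then have "p / z = (1 - u) * (p / x) + u * (p / y)"
    by (simp add: add_divide_distrib[symmetric] algebra_simps)
  then have "F (p / z) \<le> (1 - u) * F (p / x) + u * F (p / y)"
    using convex_onD[OF F u(1,2), of "p / x" "p / y"] xy \<open>0 < p\<close> by simp
  then have "z * F (p / z) \<le> z * ((1 - u) * F (p / x) + u * F (p / y))"
    using \<open>0 < z\<close> by (simp add: mult_left_mono)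
  also have "\<dots> = (z * (1 - u)) * F (p / x) + (z * u) * F (p / y)"
    by (simp add: algebra_simps)
  also have "\<dots> = (1 - t) * (x * F (p / x)) + t * (y * F (p / y))"
    using \<open>0 < z\<close> by (simp add: u(3), simp add: u_def)
  finally show "((1 - t) *\<^sub>R x + t *\<^sub>R y) * F (p / ((1 - t) *\<^sub>R x + t *\<^sub>R y))
      \<le> (1 - t) * (x * F (p / x)) + t * (y * F (p / y))"
    by (simp add: z_def)
qed simp

lemma convex_on_clip_le:
  fixes \<phi> :: "real \<Rightarrow> real"
  assumes \<phi>: "convex_on I \<phi>" and "x\<^sub>0 \<in> I" and min: "\<And>x. x \<in> I \<Longrightarrow> \<phi> x\<^sub>0 \<le> \<phi> x"
    and "q \<in> I" "a \<le> q" "q \<le> b"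
  shows "\<phi> (clip x\<^sub>0 a b) \<le> \<phi> q"
proof -
  have "connected I" using convex_connected convex_on_imp_convex[OF \<phi>] by blast
  have "\<phi> (clip x\<^sub>0 a b) \<le> max (\<phi> x\<^sub>0) (\<phi> q)"
  proof (cases "x\<^sub>0 \<le> q")
    case True
    then have "{x\<^sub>0..q} \<subseteq> I" using connected_contains_Icc \<open>connected I\<close> assms by blast
    then show ?thesis
      using True assms by (intro convex_on_le_max convex_on_subset[OF \<phi>]) (auto simp: clip_def)
  next
    case False
    then have "{q..x\<^sub>0} \<subseteq> I" using connected_contains_Icc \<open>connected I\<close> assms by blast
    then have "\<phi> (clip x\<^sub>0 a b) \<le> max (\<phi> q) (\<phi> x\<^sub>0)"
      using False assms by (intro convex_on_le_max convex_on_subset[OF \<phi>]) (auto simp: clip_def)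
    then show ?thesis by (simp add: max.commute)
  qed
  then show ?thesis using min[OF \<open>q \<in> I\<close>] by simp
qed

lemma perspective_clip_le:
  fixes f :: "real \<Rightarrow> real"
  assumes f: "convex_on {0<..} f" and "0 < r"
    and m: "\<And>t. 0 < t \<Longrightarrow> f r + m * (t - r) \<le> f t"
    and "0 < p" "0 < a" "a \<le> q" "q \<le> b"
  defines "q\<^sub>1 \<equiv> clip (p / r) a b"
  shows "q\<^sub>1 * f (p / q\<^sub>1) - (f r - m * r) * q\<^sub>1 \<le> q * f (p / q) - (f r - m * r) * q"
proof -
  define F where "F t = f t - f r - m * (t - r)" for t
  have "convex_on {0<..} F"
  proof (rule convex_onI)
    fix t x y :: real assume "0 < t" "t < 1" "x \<in> {0<..}" "y \<in> {0<..}"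
    then have "f ((1 - t) *\<^sub>R x + t *\<^sub>R y) \<le> (1 - t) * f x + t * f y"
      using convex_onD[OF f, of t x y] by simp
    then show "F ((1 - t) *\<^sub>R x + t *\<^sub>R y) \<le> (1 - t) * F x + t * F y"
      by (simp add: F_def algebra_simps)
  qed simp
  define \<phi> where "\<phi> q = q * F (p / q)" for q
  have "convex_on {0<..} \<phi>"
    unfolding \<phi>_def using convex_on_perspective[OF \<open>convex_on {0<..} F\<close> \<open>0 < p\<close>] .
  moreover have "\<phi> (p / r) \<le> \<phi> x" if "0 < x" for x
    using m[of "p / x"] that \<open>0 < p\<close> \<open>0 < r\<close> by (simp add: \<phi>_def F_def)
  ultimately have "\<phi> q\<^sub>1 \<le> \<phi> q"
    unfolding q\<^sub>1_def using assms by (intro convex_on_clip_le[of "{0<..}"]) auto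
  moreover have "\<phi> x = x * f (p / x) - (f r - m * r) * x - m * p" if "0 < x" for x
    using that by (simp add: \<phi>_def F_def algebra_simps)
  moreover have "0 < q\<^sub>1" using assms by (simp add: q\<^sub>1_def clip_def)
  ultimately show ?thesis using assms by simp
qed

lemma fdiv_eq_integral:
  assumes G: "integrable M G"
    and eq: "AE x in M. fdiv_integrand f (p x) (q x) = ereal (G x)"
  shows "fdiv f M p q = ereal (integral\<^sup>L M G)"
proof -
  have pos: "(\<integral>\<^sup>+ x. e2ennreal (fdiv_integrand f (p x) (q x)) \<partial>M) = (\<integral>\<^sup>+ x. ennreal (G x) \<partial>M)"
    and neg: "(\<integral>\<^sup>+ x. e2ennreal (- fdiv_integrand f (p x) (q x)) \<partial>M) = (\<integral>\<^sup>+ x. ennreal (- G x) \<partial>M)"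
    using eq by (auto intro!: nn_integral_cong_AE)
  have norm_fin: "(\<integral>\<^sup>+ x. ennreal (norm (G x)) \<partial>M) < \<infinity>"
    using G by (simp add: integrable_iff_bounded)
  have "(\<integral>\<^sup>+ x. ennreal (G x) \<partial>M) < \<infinity>" "(\<integral>\<^sup>+ x. ennreal (- G x) \<partial>M) < \<infinity>"
    by (rule le_less_trans[OF nn_integral_mono norm_fin], simp add: ennreal_leI)+
  moreover have "enn2ereal X = ereal (enn2real X)" if "X < \<infinity>" for X :: ennreal
    using that ennreal_enn2real[of X] enn2ereal_ennreal[of "enn2real X"] by simp
  ultimately show ?thesis
    unfolding fdiv_def pos neg real_lebesgue_integral_def[OF G] by simp
qed

text \<open>The clipping only serves measurability: outside \<open>{0<..}\<close> nothing is known about \<open>f\<close>,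
  and on a null set \<open>p x / q x\<close> may lie there.\<close>

lemma fdiv_eq_integral_clip:
  fixes p q :: "'a \<Rightarrow> real" and f :: "real \<Rightarrow> real"
  assumes "finite_measure M" and [measurable]: "p \<in> borel_measurable M" "q \<in> borel_measurable M"
    and f: "continuous_on {lo..hi} f" and "lo \<le> hi"
    and bounds: "AE x in M. 0 < p x \<and> 0 < q x \<and> q x \<le> B \<and> lo \<le> p x / q x \<and> p x / q x \<le> hi"
  shows "integrable M (\<lambda>x. q x * f (clip (p x / q x) lo hi))"
    and "fdiv f M p q = ereal (\<integral>x. q x * f (clip (p x / q x) lo hi) \<partial>M)"
proof -
  have "continuous_on UNIV (\<lambda>t. f (clip t lo hi))"
    using clip_in_Icc[OF \<open>lo \<le> hi\<close>] unfolding clip_def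
    by (intro continuous_on_compose2[OF f] continuous_intros) (auto simp: clip_def)
  then have [measurable]: "(\<lambda>t. f (clip t lo hi)) \<in> borel_measurable borel"
    by (rule borel_measurable_continuous_onI)
  obtain K where K: "\<And>t. \<bar>f (clip t lo hi)\<bar> \<le> K"
    using compact_imp_bounded[OF compact_continuous_image[OF f compact_Icc]]
      clip_in_Icc[OF \<open>lo \<le> hi\<close>]
    unfolding bounded_iff by (metis image_eqI real_norm_def)
  have "AE x in M. norm (q x * f (clip (p x / q x) lo hi)) \<le> B * K"
    using bounds by eventually_elim (auto simp: abs_mult intro!: mult_mono K)
  then show int: "integrable M (\<lambda>x. q x * f (clip (p x / q x) lo hi))"
    by (intro finite_measure.integrable_const_bound[OF \<open>finite_measure M\<close>]) measurable
  show "fdiv f M p q = ereal (\<integral>x. q x * f (clip (p x / q x) lo hi) \<partial>M)"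
    using bounds by (intro fdiv_eq_integral[OF int]) (auto simp: fdiv_integrand_def clip_eq_self)
qed

lemma fdiv_clip_le:
  fixes p q :: "'a \<Rightarrow> real" and f :: "real \<Rightarrow> real"
  assumes "finite_measure M" and f: "convex_on {0<..} f"
    and "0 < r" "0 < a" "a \<le> b" "0 < s"
    and [measurable]: "p \<in> borel_measurable M" "q \<in> borel_measurable M"
    and p_bounds: "AE x in M. s \<le> p x \<and> p x \<le> t"
    and q_bounds: "AE x in M. a \<le> q x \<and> q x \<le> b"
    and mass: "(\<integral>x. clip (p x / r) a b \<partial>M) = (\<integral>x. q x \<partial>M)"
  shows "fdiv f M p (\<lambda>x. clip (p x / r) a b) \<le> fdiv f M p q"
proof -
  interpret finite_measure M by fact
  define q\<^sub>1 where "q\<^sub>1 x = clip (p x / r) a b" for x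
  define lo hi where "lo = s / b" and "hi = max lo (t / a)"
  define G where "G q' x = q' x * f (clip (p x / q' x) lo hi)" for q' x
  have "0 < lo" "lo \<le> hi"
    using assms by (auto simp: lo_def hi_def)
  then have "continuous_on {lo..hi} f"
    using convex_on_continuous[OF _ f] by (auto elim!: continuous_on_subset)
  have ratio: "lo \<le> u / v \<and> u / v \<le> hi" if "s \<le> u" "u \<le> t" "a \<le> v" "v \<le> b" for u v
  proof -
    have "s / b \<le> u / v \<and> u / v \<le> t / a"
      using assms that by (auto intro: frac_le)
    then show ?thesis by (auto simp: lo_def hi_def)
  qed
  have fdiv_G: "integrable M q' \<and> integrable M (G q') \<and> fdiv f M p q' = ereal (integral\<^sup>L M (G q'))"
    if [measurable]: "q' \<in> borel_measurable M" and q'_bounds: "AE x in M. a \<le> q' x \<and> q' x \<le> b"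
    for q'
  proof -
    have bounds:
      "AE x in M. 0 < p x \<and> 0 < q' x \<and> q' x \<le> b \<and> lo \<le> p x / q' x \<and> p x / q' x \<le> hi"
      using p_bounds q'_bounds by eventually_elim (use assms ratio in auto)
    have "integrable M q'"
      using q'_bounds \<open>0 < a\<close> by (intro integrable_const_bound[where B = b]) auto
    with fdiv_eq_integral_clip[OF \<open>finite_measure M\<close> _ _ \<open>continuous_on {lo..hi} f\<close>
        \<open>lo \<le> hi\<close> bounds]
    show ?thesis by (simp add: G_def[abs_def])
  qed
  have q\<^sub>1_bounds: "AE x in M. a \<le> q\<^sub>1 x \<and> q\<^sub>1 x \<le> b"
    using clip_in_Icc[OF \<open>a \<le> b\<close>] by (simp add: q\<^sub>1_def)
  have q\<^sub>1_measurable[measurable]: "q\<^sub>1 \<in> borel_measurable M"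
    unfolding q\<^sub>1_def clip_def by measurable
  note G\<^sub>1 = fdiv_G[OF q\<^sub>1_measurable q\<^sub>1_bounds]
    and G\<^sub>2 = fdiv_G[OF \<open>q \<in> borel_measurable M\<close> q_bounds]
  obtain m where m: "\<And>u. 0 < u \<Longrightarrow> f r + m * (u - r) \<le> f u"
    using convex_on_real_subgradient[OF f \<open>0 < r\<close>] by blast
  define c where "c = f r - m * r"
  have "AE x in M. G q\<^sub>1 x - c * q\<^sub>1 x \<le> G q x - c * q x"
    using p_bounds q_bounds
  proof eventually_elim
    case (elim x)
    moreover have "a \<le> q\<^sub>1 x" "q\<^sub>1 x \<le> b"
      using clip_in_Icc[OF \<open>a \<le> b\<close>] by (auto simp: q\<^sub>1_def)
    ultimately show ?case
      using perspective_clip_le[OF f \<open>0 < r\<close> m, of "p x" a "q x" b] ratio[of "p x"]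
        \<open>0 < s\<close> \<open>0 < a\<close>
      by (simp add: G_def c_def q\<^sub>1_def[symmetric] clip_eq_self)
  qed
  then have "(\<integral>x. G q\<^sub>1 x - c * q\<^sub>1 x \<partial>M) \<le> (\<integral>x. G q x - c * q x \<partial>M)"
    using G\<^sub>1 G\<^sub>2 by (intro integral_mono_AE) auto
  then have "integral\<^sup>L M (G q\<^sub>1) - c * integral\<^sup>L M q\<^sub>1 \<le> integral\<^sup>L M (G q) - c * integral\<^sup>L M q"
    using G\<^sub>1 G\<^sub>2 by simp
  then show ?thesis
    using G\<^sub>1 G\<^sub>2 mass by (simp add: q\<^sub>1_def[abs_def])
qed

lemma integral_eq_emeasure_density_space:
  fixes h :: "'a \<Rightarrow> real"
  assumes [measurable]: "h \<in> borel_measurable M" and "AE x in M. 0 \<le> h x" and "0 \<le> c"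
    and "emeasure (density M (\<lambda>x. ennreal (h x))) (space M) = ennreal c"
  shows "integrable M h" and "integral\<^sup>L M h = c"
proof -
  have "(\<integral>\<^sup>+ x. ennreal (h x) \<partial>M) = emeasure (density M (\<lambda>x. ennreal (h x))) (space M)"
    by (simp add: emeasure_density cong: nn_integral_cong)
  then have "(\<integral>\<^sup>+ x. ennreal (h x) \<partial>M) = ennreal c"
    using assms(4) by simp
  then show "integrable M h" "integral\<^sup>L M h = c"
    using nn_integral_eq_integrable[of h M c] assms by auto
qed

lemma N_gamma_densD:
  assumes "P \<in> N_gamma g P0" and "0 < g" and "sigma_finite_measure P0"
  shows "AE x in P0. 1 / g \<le> dens P0 P x \<and> dens P0 P x \<le> g"
    and "integrable P0 (dens P0 P)" and "integral\<^sup>L P0 (dens P0 P) = 1"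
proof -
  have P: "prob_space P" "sets P = sets P0" "absolutely_continuous P0 P"
    and RN_bounds: "AE x in P0. ennreal (1 / g) \<le> RN_deriv P0 P x \<and> RN_deriv P0 P x \<le> ennreal g"
    using assms(1) by (auto simp: N_gamma_def)
  have RN_eq: "AE x in P0. RN_deriv P0 P x = ennreal (dens P0 P x)"
    using RN_bounds by eventually_elim
      (auto simp: dens_def intro!: ennreal_enn2real[symmetric] le_less_trans[OF _ ennreal_less_top])
  show bounds: "AE x in P0. 1 / g \<le> dens P0 P x \<and> dens P0 P x \<le> g"
    using RN_bounds RN_eq
  proof eventually_elim
    case (elim x)
    moreover have "0 \<le> dens P0 P x" by (simp add: dens_def)
    ultimately show ?case using \<open>0 < g\<close> by (simp add: ennreal_le_iff)
  qed
  have [measurable]: "dens P0 P \<in> borel_measurable P0"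
    unfolding dens_def by measurable
  have "density P0 (\<lambda>x. ennreal (dens P0 P x)) = density P0 (RN_deriv P0 P)"
    using RN_eq by (intro density_cong) auto
  also have "\<dots> = P"
    using sigma_finite_measure.density_RN_deriv[OF assms(3) P(3,2)] .
  finally have "emeasure (density P0 (\<lambda>x. ennreal (dens P0 P x))) (space P0) = ennreal 1"
    using prob_space.emeasure_space_1[OF P(1)] sets_eq_imp_space_eq[OF P(2)] by simp
  then show "integrable P0 (dens P0 P)" "integral\<^sup>L P0 (dens P0 P) = 1"
    using integral_eq_emeasure_density_space[of "dens P0 P" P0 1] by (auto simp: dens_def)
qed

lemma mix_weight_nonneg:
  assumes "1 \<le> g" "0 \<le> \<epsilon>"
  shows "0 \<le> mix_weight g \<epsilon>"
proof -
  have "0 \<le> (1 - 1 / g) * exp \<epsilon>" using assms by simp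
  then have "0 \<le> (1 - 1 / g) * exp \<epsilon> + g - 1" using assms by linarith
  then show ?thesis
    unfolding mix_weight_def using assms by (intro divide_nonneg_nonneg) auto
qed

lemma mix_weight_range:
  assumes "1 < g"
  shows "mix_weight g \<epsilon> * (1 / g) + (1 - mix_weight g \<epsilon>) = (g + 1) / (g + exp \<epsilon>)"
    and "mix_weight g \<epsilon> * g + (1 - mix_weight g \<epsilon>) = (g + 1) * exp \<epsilon> / (g + exp \<epsilon>)"
proof -
  define w where "w = mix_weight g \<epsilon>"
  have "g + exp \<epsilon> \<noteq> 0" using assms exp_gt_zero[of \<epsilon>] by linarith
  have "(1 - 1 / g) * exp \<epsilon> + g - 1 = (g - 1) * (g + exp \<epsilon>) / g"
    using assms by (simp add: field_simps)
  then have "w * (g - 1) = g * (exp \<epsilon> - 1) / (g + exp \<epsilon>)"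
    using assms by (simp add: w_def mix_weight_def)
  then show "w * (1 / g) + (1 - w) = (g + 1) / (g + exp \<epsilon>)"
    and "w * g + (1 - w) = (g + 1) * exp \<epsilon> / (g + exp \<epsilon>)"
    using assms \<open>g + exp \<epsilon> \<noteq> 0\<close> by (simp_all add: field_simps)
qed

lemma fldp_dens_bounds:
  assumes "1 < g" "0 \<le> \<epsilon>" "1 / g \<le> p x" "p x \<le> g"
  shows "(g + 1) / (g + exp \<epsilon>) \<le> fldp_dens g \<epsilon> p x"
    and "fldp_dens g \<epsilon> p x \<le> (g + 1) * exp \<epsilon> / (g + exp \<epsilon>)"
  using mult_left_mono[OF assms(3), of "mix_weight g \<epsilon>"]
    mult_left_mono[OF assms(4), of "mix_weight g \<epsilon>"] mix_weight_nonneg[of g \<epsilon>] mix_weight_range[OF assms(1), of \<epsilon>] assms(1,2)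
  by (simp_all add: fldp_dens_def)

lemma integral_fldp_dens:
  assumes "prob_space M" "integrable M p" "integral\<^sup>L M p = 1"
  shows "integral\<^sup>L M (fldp_dens g \<epsilon> p) = 1"
proof -
  interpret prob_space M by fact
  show ?thesis using assms(2,3) by (simp add: fldp_dens_def[abs_def] prob_space)
qed

theorem proposition2:
  fixes P0 P :: "(real ^ 'n) measure" and \<gamma> :: nat and \<epsilon> r :: real
    and f :: "real \<Rightarrow> real"
  assumes "\<gamma> \<ge> 2" and "\<epsilon> \<ge> 0"
    and "prob_space P0" and "sets P0 = sets borel"
    and "P \<in> N_gamma (real \<gamma>) P0"
    and "convex_on {0<..} f" and "f 1 = 0"
    and "r > 0"
    and "emeasure (density P0 (\<lambda>x. ennreal (ldp_dens (real \<gamma>) \<epsilon> r (dens P0 P) x))) (space P0) = 1"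
  shows "fdiv f P0 (dens P0 P) (ldp_dens (real \<gamma>) \<epsilon> r (dens P0 P))
         \<le> fdiv f P0 (dens P0 P) (fldp_dens (real \<gamma>) \<epsilon> (dens P0 P))"
proof -
  interpret prob_space P0 by fact
  define g where "g = real \<gamma>"
  define a b where "a = (g + 1) / (g + exp \<epsilon>)" and "b = (g + 1) * exp \<epsilon> / (g + exp \<epsilon>)"
  define p where "p = dens P0 P"
  have "1 < g" using \<open>\<gamma> \<ge> 2\<close> by (simp add: g_def)
  have "0 < a" "a \<le> b"
    using \<open>1 < g\<close> \<open>\<epsilon> \<ge> 0\<close> by (auto simp: a_def b_def add_pos_pos divide_right_mono)
  have [measurable]: "p \<in> borel_measurable P0" unfolding p_def dens_def by measurable
  have p_bounds: "AE x in P0. 1 / g \<le> p x \<and> p x \<le> g" and "integrable P0 p" "integral\<^sup>L P0 p = 1"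
    using N_gamma_densD[of P g P0] assms(5) \<open>1 < g\<close> sigma_finite_measure_axioms
    by (auto simp: g_def p_def)
  have ldp: "ldp_dens g \<epsilon> r p = (\<lambda>x. clip (p x / r) a b)"
    by (simp add: ldp_dens_def a_def b_def fun_eq_iff)
  have "integral\<^sup>L P0 (\<lambda>x. clip (p x / r) a b) = 1"
    using assms(9) \<open>0 < a\<close> \<open>a \<le> b\<close> unfolding g_def[symmetric] p_def[symmetric] ldp
    by (intro integral_eq_emeasure_density_space) (auto simp: clip_def)
  moreover have "integral\<^sup>L P0 (fldp_dens g \<epsilon> p) = 1"
    using \<open>prob_space P0\<close> \<open>integrable P0 p\<close> \<open>integral\<^sup>L P0 p = 1\<close>
    by (rule integral_fldp_dens)
  moreover have "AE x in P0. a \<le> fldp_dens g \<epsilon> p x \<and> fldp_dens g \<epsilon> p x \<le> b"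
    using p_bounds by eventually_elim
      (use fldp_dens_bounds[OF \<open>1 < g\<close> \<open>\<epsilon> \<ge> 0\<close>, of p] in \<open>simp add: a_def b_def\<close>)
  ultimately have "fdiv f P0 p (\<lambda>x. clip (p x / r) a b) \<le> fdiv f P0 p (fldp_dens g \<epsilon> p)"
    using \<open>1 < g\<close>
    by (intro fdiv_clip_le[OF finite_measure_axioms \<open>convex_on {0<..} f\<close> \<open>r > 0\<close> \<open>0 < a\<close> \<open>a \<le> b\<close>
          _ _ _ p_bounds])
      (auto simp: fldp_dens_def[abs_def])
  then show ?thesis by (simp only: g_def[symmetric] p_def[symmetric] ldp)
qed

end
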